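(* If there exists an $(N,NK,M,R)$ $\mathcal D_{(K,K,\dots,K)}$-non-private scheme, then there exists an $(N,K,M,R)$-private scheme.
   Context: Files $W_0,\dots,W_{N-1}$ independent, each uniform on $[2^F]=\{0,\dots,2^F-1\}$, $\bar W=(W_0,\dots,W_{N-1})$; $[n]=\{0,\dots,n-1\}$. Non-private scheme for $N$ files and $L$ users with memory $M$ and rate $R$: cache encoders $C_j:[2^F]^N\to[2^{MF}]$, transmission encoder $E:[2^F]^N\times[N]^L\to[2^{RF}]$ (the demand vector is also transmitted), decoders $G_j$ with $W_{d_j}=G_j(\bar d,E(\bar W,\bar d),C_j(\bar W))$. For $\mathcal D\subseteq[N]^L$, a $\mathcal D$-non-private scheme is one satisfying this decoding condition for all $\bar W$ and all $\bar d\in\mathcal D$. For a demand vector $\bar d\in[N]^L$, its type is $(t_0,\dots,t_{N-1})$ where $t_i$ is the number of users requesting file $i$; $\mathcal D_{\bar t}$ denotes the set of demand vectors of type $\bar t$. Here $L=NK$ and $\mathcal D_{(K,\dots,K)}$ is the set of demand vectors in which every file is requested by exactly $K$ users. Private scheme $(N,K,M,R)$: $K$ users with independent uniform demands $D_k\in[N]$, $\bar D=(D_0,\dots,D_{K-1})$, $\tilde D_k$ = all demands except $D_k$; user $k$ shares a key $S_k$ (finite alphabet) with the server, server private randomness $P$ (finite alphabet), all of $P$, $S_k$, $D_k$, $W_i$ mutually independent; cache $Z_k=(C_k(S_k,P,\bar W),S_k)$ with $C_k$ valued in $[2^{MF}]$; broadcast $X=(E(\bar W,\bar D,P,\bar S),J(\bar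 D,P,\bar S))$ with $E$ valued in $[2^{RF}]$ and $J$ valued in a finite set whose $\log_2$-size is negligible compared to $F$; user $k$ recovers $W_{D_k}$ exactly from $(D_k,S_k,X,Z_k)$; and $I(\tilde D_k;Z_k,X,D_k)=0$ for all $k$. *)

theory Defs
  imports "HOL-Probability.Probability"
begin

definition file_vectors :: "nat \<Rightarrow> nat \<Rightarrow> (nat \<Rightarrow> nat) set" where
  "file_vectors N F = PiE {..<N} (\<lambda>_. {..<2 ^ F})"

definition demand_vectors :: "nat \<Rightarrow> nat \<Rightarrow> (nat \<Rightarrow> nat) set" where
  "demand_vectors N L = PiE {..<L} (\<lambda>_. {..<N})"

definition demand_type_set :: "nat \<Rightarrow> nat \<Rightarrow> (nat \<Rightarrow> nat) \<Rightarrow> (nat \<Rightarrow> nat) set" where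
  "demand_type_set N L t =
     {d \<in> demand_vectors N L. \<forall>i<N. card {j \<in> {..<L}. d j = i} = t i}"

definition nonprivate_scheme ::
  "nat \<Rightarrow> nat \<Rightarrow> real \<Rightarrow> real \<Rightarrow> nat \<Rightarrow> (nat \<Rightarrow> nat) set \<Rightarrow> bool" where
  "nonprivate_scheme N L M R F D \<longleftrightarrow>
    (\<exists>(C :: nat \<Rightarrow> (nat \<Rightarrow> nat) \<Rightarrow> nat)
      (E :: (nat \<Rightarrow> nat) \<Rightarrow> (nat \<Rightarrow> nat) \<Rightarrow> nat)
      (G :: nat \<Rightarrow> (nat \<Rightarrow> nat) \<Rightarrow> nat \<Rightarrow> nat \<Rightarrow> nat).
       (\<forall>j<L. \<forall>W\<in>file_vectors N F. real (C j W) < 2 powr (M * real F)) \<and>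
       (\<forall>W\<in>file_vectors N F. \<forall>d\<in>demand_vectors N L. real (E W d) < 2 powr (R * real F)) \<and>
       (\<forall>W\<in>file_vectors N F. \<forall>d\<in>D \<inter> demand_vectors N L. \<forall>j<L.
          G j d (E W d) (C j W) = W (d j)))"

definition mutual_info :: "'a pmf \<Rightarrow> ('a \<Rightarrow> 'b) \<Rightarrow> ('a \<Rightarrow> 'c) \<Rightarrow> real" where
  "mutual_info \<Omega> X Y =
    (let PXY = map_pmf (\<lambda>\<omega>. (X \<omega>, Y \<omega>)) \<Omega>; PX = map_pmf X \<Omega>; PY = map_pmf Y \<Omega>
     in \<Sum>z\<in>set_pmf PXY. pmf PXY z * log 2 (pmf PXY z / (pmf PX (fst z) * pmf PY (snd z))))"

text \<open>An outcome is
  (D, S, P, W): demand vector D (D_k uniform on [N], k<K), key vector S (S_k ~ pS k),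
  server randomness P ~ pP, files W (W_i uniform on [2^F], i<N); all mutually independent.\<close>
definition private_space ::
  "nat \<Rightarrow> nat \<Rightarrow> nat \<Rightarrow> (nat \<Rightarrow> nat pmf) \<Rightarrow> nat pmf
     \<Rightarrow> ((nat \<Rightarrow> nat) \<times> (nat \<Rightarrow> nat) \<times> nat \<times> (nat \<Rightarrow> nat)) pmf" where
  "private_space N K F pS pP =
     pair_pmf (Pi_pmf {..<K} 0 (\<lambda>_. pmf_of_set {..<N}))
       (pair_pmf (Pi_pmf {..<K} 0 pS)
         (pair_pmf pP (Pi_pmf {..<N} 0 (\<lambda>_. pmf_of_set {..<2 ^ F}))))"

text \<open>An (N,K,M,R)-private scheme with file size F, where the auxiliary transmission J takes
  values in [B].\<close>
definition private_scheme ::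
  "nat \<Rightarrow> nat \<Rightarrow> real \<Rightarrow> real \<Rightarrow> nat \<Rightarrow> nat \<Rightarrow> bool" where
  "private_scheme N K M R F B \<longleftrightarrow>
    (\<exists>(pS :: nat \<Rightarrow> nat pmf) (pP :: nat pmf)
      (C :: nat \<Rightarrow> nat \<Rightarrow> nat \<Rightarrow> (nat \<Rightarrow> nat) \<Rightarrow> nat)
      (E :: (nat \<Rightarrow> nat) \<Rightarrow> (nat \<Rightarrow> nat) \<Rightarrow> nat \<Rightarrow> (nat \<Rightarrow> nat) \<Rightarrow> nat)
      (J :: (nat \<Rightarrow> nat) \<Rightarrow> nat \<Rightarrow> (nat \<Rightarrow> nat) \<Rightarrow> nat)
      (Dec :: nat \<Rightarrow> nat \<Rightarrow> nat \<Rightarrow> nat \<times> nat \<Rightarrow> nat \<times> nat \<Rightarrow> nat).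
      (\<forall>k<K. finite (set_pmf (pS k))) \<and> finite (set_pmf pP) \<and>
      (let \<Omega> = private_space N K F pS pP;
           X = (\<lambda>(d, s, p, w). (E w d p s, J d p s));
           Z = (\<lambda>k (d, s, p, w). (C k (s k) p w, s k))
       in
        (\<forall>k<K. \<forall>(d, s, p, w)\<in>set_pmf \<Omega>. real (C k (s k) p w) < 2 powr (M * real F)) \<and>
        (\<forall>(d, s, p, w)\<in>set_pmf \<Omega>. real (E w d p s) < 2 powr (R * real F) \<and> J d p s < B) \<and>
        (\<forall>k<K. \<forall>\<omega>\<in>set_pmf \<Omega>. case \<omega> of (d, s, p, w) \<Rightarrow>
            Dec k (d k) (s k) (X \<omega>) (Z k \<omega>) = w (d k)) \<and>
        (\<forall>k<K. mutual_info \<Omega>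
            (\<lambda>(d, s, p, w). restrict d ({..<K} - {k}))
            (\<lambda>\<omega>. (Z k \<omega>, X \<omega>, fst \<omega> k)) = 0)))"

end

theory Submission
  imports Defs
begin

text \<open>User k of the private system draws a uniform key S_k in [N] and plays the
  role of the virtual user S_k K + k of a non-private system with NK users. The server announces
  the shift vector T = D - S (mod N) and runs the non-private scheme on the virtual demand vector
  in which virtual user n K + k requests file n + T_k (mod N); every file is then requested by
  exactly K virtual users, and the virtual user S_k K + k requests D_k. Privacy is a one-time pad
  argument: for j \<noteq> k the entry T_j = D_j - S_j is uniform and independent of everything else,
  so what user k sees is independent of the other demands.\<close>

lemma mod_sub_sub_cancel:
  "(c::nat) < N \<Longrightarrow> x < N \<Longrightarrow> (c + N - (c + N - x) mod N) mod N = x"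
  by (auto simp: mod_if)

lemma mod_add_eq_iff_eq_mod_sub:
  "(c::nat) < N \<Longrightarrow> n < N \<Longrightarrow> i < N \<Longrightarrow> ((n + c) mod N = i) = (n = (i + N - c) mod N)"
  by (auto simp: mod_if)

lemma mod_add_mod_sub_cancel:
  "(c::nat) < N \<Longrightarrow> x < N \<Longrightarrow> (c + (x + N - c) mod N) mod N = x"
  by (auto simp: mod_if)

lemma mult_add_less_mult:
  "(n::nat) < N \<Longrightarrow> k < K \<Longrightarrow> n * K + k < N * K"
proof -
  assume "n < N" "k < K"
  then have "n * K + k < Suc n * K" by simp
  also have "\<dots> \<le> N * K" using \<open>n < N\<close> by (intro mult_right_mono) auto
  finally show ?thesis .
qed

lemma mutual_info_eq_0_if_indep:
  assumes "map_pmf (\<lambda>\<omega>. (X \<omega>, Y \<omega>)) \<Omega> = pair_pmf P Q"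
  shows "mutual_info \<Omega> X Y = 0"
proof -
  have PX: "map_pmf X \<Omega> = P"
    using arg_cong[OF assms, of "map_pmf fst"] by (simp add: pmf.map_comp o_def map_fst_pair_pmf)
  have PY: "map_pmf Y \<Omega> = Q"
    using arg_cong[OF assms, of "map_pmf snd"] by (simp add: pmf.map_comp o_def map_snd_pair_pmf)
  show ?thesis unfolding mutual_info_def Let_def assms PX PY
  proof (intro sum.neutral ballI)
    fix z assume z: "z \<in> set_pmf (pair_pmf P Q)"
    obtain a b where z_eq: "z = (a, b)" by force
    with z have "pmf P a > 0" "pmf Q b > 0" by (auto simp: pmf_positive)
    then show "pmf (pair_pmf P Q) z * log 2 (pmf (pair_pmf P Q) z / (pmf P (fst z) * pmf Q (snd z))) = 0"
      by (simp add: z_eq pmf_pair)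
  qed
qed

lemma Pi_pmf_insert_restrict_indep:
  assumes "finite A" "k \<notin> A"
  shows "bind_pmf (Pi_pmf (insert k A) dflt p) (\<lambda>d. map_pmf (\<lambda>y. (restrict d A, y)) (\<Psi> (d k)))
       = pair_pmf (map_pmf (\<lambda>f. restrict f A) (Pi_pmf A dflt p)) (bind_pmf (p k) \<Psi>)"
proof -
  have restrict_upd: "restrict (f(k := y)) A = restrict f A" for f y
    using assms(2) by (auto simp: restrict_def fun_eq_iff)
  have "bind_pmf (Pi_pmf (insert k A) dflt p) (\<lambda>d. map_pmf (\<lambda>y. (restrict d A, y)) (\<Psi> (d k)))
    = bind_pmf (pair_pmf (p k) (Pi_pmf A dflt p)) (\<lambda>(y, f). map_pmf (\<lambda>z. (restrict f A, z)) (\<Psi> y))"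
    by (simp add: Pi_pmf_insert[OF assms] bind_map_pmf restrict_upd case_prod_beta' o_def)
  also have "\<dots> = bind_pmf (p k) (\<lambda>y. bind_pmf (Pi_pmf A dflt p) (\<lambda>f. map_pmf (\<lambda>z. (restrict f A, z)) (\<Psi> y)))"
    by (simp add: pair_pmf_def bind_assoc_pmf bind_return_pmf)
  also have "\<dots> = bind_pmf (Pi_pmf A dflt p) (\<lambda>f. bind_pmf (p k) (\<lambda>y. map_pmf (\<lambda>z. (restrict f A, z)) (\<Psi> y)))"
    by (rule bind_commute_pmf)
  also have "\<dots> = bind_pmf (Pi_pmf A dflt p) (\<lambda>f. map_pmf (\<lambda>z. (restrict f A, z)) (bind_pmf (p k) \<Psi>))"
    by (simp add: map_bind_pmf)
  also have "\<dots> = pair_pmf (map_pmf (\<lambda>f. restrict f A) (Pi_pmf A dflt p)) (bind_pmf (p k) \<Psi>)"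
    by (simp add: pair_pmf_def bind_map_pmf map_pmf_def bind_assoc_pmf bind_return_pmf)
  finally show ?thesis .
qed

lemma set_pmf_private_space_uniform_keys:
  assumes "N \<ge> 1" "(d, s, p, w) \<in> set_pmf (private_space N K F (\<lambda>_. pmf_of_set {..<N}) (return_pmf 0))"
  shows "d \<in> PiE_dflt {..<K} 0 (\<lambda>_. {..<N})" "s \<in> PiE_dflt {..<K} 0 (\<lambda>_. {..<N})"
    and "w \<in> PiE_dflt {..<N} 0 (\<lambda>_. {..<2 ^ F})"
  using assms by (auto simp: private_space_def set_Pi_pmf o_def lessThan_empty_iff)

text \<open>For b < N, (a + N - b) mod N is a - b modulo N; the detour through N avoids truncated
  subtraction.\<close>

definition shift_vector :: "nat \<Rightarrow> nat \<Rightarrow> (nat \<Rightarrow> nat) \<Rightarrow> (nat \<Rightarrow> nat) \<Rightarrow> nat \<Rightarrow> nat" where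
  "shift_vector N K d s = restrict (\<lambda>j. (d j + N - s j) mod N) {..<K}"

definition pad_keys :: "nat \<Rightarrow> nat \<Rightarrow> nat \<Rightarrow> (nat \<Rightarrow> nat) \<Rightarrow> (nat \<Rightarrow> nat) \<Rightarrow> nat \<Rightarrow> nat" where
  "pad_keys N K k d s = (\<lambda>j. if j < K then if j = k then s j else (d j + N - s j) mod N else 0)"

lemma pad_keys_in_keys:
  "N \<ge> 1 \<Longrightarrow> s \<in> PiE_dflt {..<K} 0 (\<lambda>_. {..<N}) \<Longrightarrow>
    pad_keys N K k d s \<in> PiE_dflt {..<K} 0 (\<lambda>_. {..<N})"
  by (auto simp: PiE_dflt_def pad_keys_def)

lemma pad_keys_involution:
  "d \<in> PiE_dflt {..<K} 0 (\<lambda>_. {..<N}) \<Longrightarrow> s \<in> PiE_dflt {..<K} 0 (\<lambda>_. {..<N}) \<Longrightarrow>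
    pad_keys N K k d (pad_keys N K k d s) = s"
  by (auto simp: PiE_dflt_def pad_keys_def fun_eq_iff mod_sub_sub_cancel)

lemma map_pmf_pad_keys_uniform:
  assumes "N \<ge> 1" "d \<in> PiE_dflt {..<K} 0 (\<lambda>_. {..<N})"
  shows "map_pmf (pad_keys N K k d) (Pi_pmf {..<K} 0 (\<lambda>_. pmf_of_set {..<N}))
           = Pi_pmf {..<K} 0 (\<lambda>_. pmf_of_set {..<N})"
proof -
  let ?keys = "PiE_dflt {..<K} 0 (\<lambda>_. {..<N::nat})"
  have uniform: "Pi_pmf {..<K} 0 (\<lambda>_. pmf_of_set {..<N}) = pmf_of_set ?keys"
    using assms by (intro Pi_pmf_of_set) (auto simp: lessThan_empty_iff)
  have "?keys \<noteq> {}" "finite ?keys"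
    using assms by (auto simp: lessThan_empty_iff intro: finite_PiE_dflt)
  then show ?thesis unfolding uniform
    by (intro map_pmf_of_set_bij_betw bij_betw_byWitness[where f'="pad_keys N K k d"])
       (use assms pad_keys_involution pad_keys_in_keys in auto)
qed

lemma shift_vector_pad_keys:
  "k < K \<Longrightarrow> d \<in> PiE_dflt {..<K} 0 (\<lambda>_. {..<N}) \<Longrightarrow> s \<in> PiE_dflt {..<K} 0 (\<lambda>_. {..<N}) \<Longrightarrow>
   shift_vector N K d (pad_keys N K k d s) = (restrict s {..<K})(k := (d k + N - s k) mod N)"
  by (auto simp: PiE_dflt_def pad_keys_def shift_vector_def fun_eq_iff mod_sub_sub_cancel)

text \<open>Substituting the keys by pad_keys, which preserves their uniform law, shows that given the
  demand vector d, the view (S_k, T) of user k has a law depending on d only through d_k.\<close>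

lemma map_pmf_shift_vector_pad_keys:
  assumes "k < K" "N \<ge> 1" "d \<in> PiE_dflt {..<K} 0 (\<lambda>_. {..<N})"
  shows "map_pmf (\<lambda>(s, r). \<Phi> r (s k) (shift_vector N K d s))
           (pair_pmf (Pi_pmf {..<K} 0 (\<lambda>_. pmf_of_set {..<N})) R)
       = map_pmf (\<lambda>(s, r). \<Phi> r (s k) ((restrict s {..<K})(k := (d k + N - s k) mod N)))
           (pair_pmf (Pi_pmf {..<K} 0 (\<lambda>_. pmf_of_set {..<N})) R)"
    (is "map_pmf ?view (pair_pmf ?keys R) = _")
proof -
  have "pair_pmf ?keys R = map_pmf (apfst (pad_keys N K k d)) (pair_pmf ?keys R)"
    by (simp add: map_pmf_pad_keys_uniform[OF assms(2,3)] flip: pair_map_pmf1)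
  then have "map_pmf ?view (pair_pmf ?keys R)
      = map_pmf (?view \<circ> apfst (pad_keys N K k d)) (pair_pmf ?keys R)"
    by (metis pmf.map_comp)
  also have "\<dots> = map_pmf (\<lambda>(s, r). \<Phi> r (s k) ((restrict s {..<K})(k := (d k + N - s k) mod N)))
      (pair_pmf ?keys R)"
    using assms by (intro map_pmf_cong refl)
      (auto simp: set_Pi_pmf o_def lessThan_empty_iff shift_vector_pad_keys, simp add: pad_keys_def)
  finally show ?thesis .
qed

lemma other_demands_indep_of_view:
  assumes "k < K" "N \<ge> 1"
  shows "\<exists>P Q. map_pmf (\<lambda>(d, s, p, w). (restrict d ({..<K} - {k}), \<Phi> w (s k) (d k) (shift_vector N K d s)))
      (private_space N K F (\<lambda>_. pmf_of_set {..<N}) (return_pmf 0)) = pair_pmf P Q"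
proof -
  define U where "U = pmf_of_set {..<N::nat}"
  define keys where "keys = Pi_pmf {..<K} (0::nat) (\<lambda>_. U)"
  define rest where "rest = pair_pmf (return_pmf (0::nat)) (Pi_pmf {..<N} (0::nat) (\<lambda>_. pmf_of_set {..<(2::nat) ^ F}))"
  define others where "others = {..<K} - {k}"
  define \<Psi> where "\<Psi> a = map_pmf (\<lambda>(s, p, w). \<Phi> w (s k) a ((restrict s {..<K})(k := (a + N - s k) mod N)))
     (pair_pmf keys rest)" for a
  have "map_pmf (\<lambda>(d, s, p, w). (restrict d others, \<Phi> w (s k) (d k) (shift_vector N K d s)))
      (private_space N K F (\<lambda>_. pmf_of_set {..<N}) (return_pmf 0))
      = bind_pmf keys (\<lambda>d. map_pmf (\<lambda>y. (restrict d others, y))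
          (map_pmf (\<lambda>(s, p, w). \<Phi> w (s k) (d k) (shift_vector N K d s)) (pair_pmf keys rest)))"
    unfolding private_space_def keys_def[symmetric] rest_def[symmetric] U_def[symmetric]
    by (simp add: pair_pmf_def map_pmf_def bind_assoc_pmf bind_return_pmf case_prod_beta')
  also have "\<dots> = bind_pmf keys (\<lambda>d. map_pmf (\<lambda>y. (restrict d others, y)) (\<Psi> (d k)))"
  proof (intro bind_pmf_cong refl arg_cong[where f="map_pmf _"])
    fix d assume "d \<in> set_pmf keys"
    then have "d \<in> PiE_dflt {..<K} 0 (\<lambda>_. {..<N})"
      using assms by (simp add: keys_def U_def set_Pi_pmf o_def lessThan_empty_iff)
    from map_pmf_shift_vector_pad_keys[OF assms this, of "\<lambda>(p, w) sk t. \<Phi> w sk (d k) t" rest]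
    show "map_pmf (\<lambda>(s, p, w). \<Phi> w (s k) (d k) (shift_vector N K d s)) (pair_pmf keys rest) = \<Psi> (d k)"
      by (simp add: \<Psi>_def keys_def U_def case_prod_beta')
  qed
  also have "\<dots> = pair_pmf (map_pmf (\<lambda>f. restrict f others) (Pi_pmf others 0 (\<lambda>_. U))) (bind_pmf U \<Psi>)"
  proof -
    have "{..<K} = insert k others" using assms(1) by (auto simp: others_def)
    then show ?thesis unfolding keys_def
      by (simp only:) (rule Pi_pmf_insert_restrict_indep, auto simp: others_def)
  qed
  finally show ?thesis unfolding others_def by blast
qed

definition virtual_demands :: "nat \<Rightarrow> nat \<Rightarrow> (nat \<Rightarrow> nat) \<Rightarrow> nat \<Rightarrow> nat" where
  "virtual_demands N K t = restrict (\<lambda>v. (v div K + t (v mod K)) mod N) {..<N * K}"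

lemma virtual_demands_mult_add:
  "n < N \<Longrightarrow> k < K \<Longrightarrow> virtual_demands N K t (n * K + k) = (n + t k) mod N"
  by (simp add: virtual_demands_def mult_add_less_mult)

lemma virtual_demands_in_demand_vectors:
  "N \<ge> 1 \<Longrightarrow> virtual_demands N K t \<in> demand_vectors N (N * K)"
  by (auto simp: demand_vectors_def virtual_demands_def)

lemma virtual_demands_in_demand_type_set:
  assumes "N \<ge> 1" and t: "\<And>j. j < K \<Longrightarrow> t j < N"
  shows "virtual_demands N K t \<in> demand_type_set N (N * K) (\<lambda>_. K)"
proof -
  have "card {v \<in> {..<N * K}. virtual_demands N K t v = i} = K" if i: "i < N" for i
  proof -
    define g where "g k = ((i + N - t k) mod N) * K + k" for k
    have "{v \<in> {..<N * K}. virtual_demands N K t v = i} = g ` {..<K}"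
    proof (intro equalityI subsetI)
      fix v assume "v \<in> {v \<in> {..<N * K}. virtual_demands N K t v = i}"
      then have v: "v < N * K" and v_i: "(v div K + t (v mod K)) mod N = i"
        by (auto simp: virtual_demands_def)
      have "K > 0" using v by (cases "K = 0") auto
      then have n: "v div K < N" and k: "v mod K < K"
        using v by (auto simp: less_mult_imp_div_less)
      with v_i have "v div K = (i + N - t (v mod K)) mod N"
        using mod_add_eq_iff_eq_mod_sub[OF t[OF k] n i] by simp
      then have "v = g (v mod K)" unfolding g_def by (metis div_mult_mod_eq)
      with k show "v \<in> g ` {..<K}" by blast
    next
      fix v assume "v \<in> g ` {..<K}"
      then obtain k where k: "k < K" and v: "v = g k" by blast
      have n: "(i + N - t k) mod N < N" using i by simp
      have "virtual_demands N K t v = i"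
        unfolding v g_def virtual_demands_mult_add[OF n k]
        using mod_add_eq_iff_eq_mod_sub[OF t[OF k] n i] by simp
      with n k show "v \<in> {v \<in> {..<N * K}. virtual_demands N K t v = i}"
        by (simp add: v g_def mult_add_less_mult)
    qed
    moreover have "inj_on g {..<K}"
      by (rule inj_on_inverseI[where g="\<lambda>v. v mod K"]) (simp add: g_def)
    ultimately show ?thesis by (simp add: card_image)
  qed
  then show ?thesis
    using assms by (simp add: demand_type_set_def virtual_demands_in_demand_vectors)
qed

locale virtual_user_scheme =
  fixes N K F :: nat and M R :: real and B :: nat
    and C0 :: "nat \<Rightarrow> (nat \<Rightarrow> nat) \<Rightarrow> nat"
    and E0 :: "(nat \<Rightarrow> nat) \<Rightarrow> (nat \<Rightarrow> nat) \<Rightarrow> nat"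
    and G :: "nat \<Rightarrow> (nat \<Rightarrow> nat) \<Rightarrow> nat \<Rightarrow> nat \<Rightarrow> nat"
    and code :: "(nat \<Rightarrow> nat) \<Rightarrow> nat"
  assumes N_pos: "N \<ge> 1"
    and cache_size: "\<And>j W. j < N * K \<Longrightarrow> W \<in> file_vectors N F \<Longrightarrow> real (C0 j W) < 2 powr (M * real F)"
    and rate: "\<And>W d. W \<in> file_vectors N F \<Longrightarrow> d \<in> demand_vectors N (N * K) \<Longrightarrow>
      real (E0 W d) < 2 powr (R * real F)"
    and decodes: "\<And>W d j. W \<in> file_vectors N F \<Longrightarrow> d \<in> demand_type_set N (N * K) (\<lambda>_. K) \<Longrightarrow>
      j < N * K \<Longrightarrow> G j d (E0 W d) (C0 j W) = W (d j)"
    and code_inj: "inj_on code (demand_vectors N K)"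
    and code_range: "code ` demand_vectors N K \<subseteq> {..<B}"
begin

text \<open>The files of private_space default to 0 outside [N], hence
  the restriction to {..<N} before calling C0 and E0.\<close>

abbreviation \<Omega> where "\<Omega> \<equiv> private_space N K F (\<lambda>_. pmf_of_set {..<N}) (return_pmf 0)"

definition cache :: "nat \<Rightarrow> nat \<Rightarrow> nat \<Rightarrow> (nat \<Rightarrow> nat) \<Rightarrow> nat" where
  "cache k sk p w = C0 (sk * K + k) (restrict w {..<N})"

definition transmission :: "(nat \<Rightarrow> nat) \<Rightarrow> (nat \<Rightarrow> nat) \<Rightarrow> nat \<Rightarrow> (nat \<Rightarrow> nat) \<Rightarrow> nat" where
  "transmission w d p s = E0 (restrict w {..<N}) (virtual_demands N K (shift_vector N K d s))"

definition announcement :: "(nat \<Rightarrow> nat) \<Rightarrow> nat \<Rightarrow> (nat \<Rightarrow> nat) \<Rightarrow> nat" where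
  "announcement d p s = code (shift_vector N K d s)"

definition decoder :: "nat \<Rightarrow> nat \<Rightarrow> nat \<Rightarrow> nat \<times> nat \<Rightarrow> nat \<times> nat \<Rightarrow> nat" where
  "decoder k dk sk x z =
     G (sk * K + k) (virtual_demands N K (inv_into (demand_vectors N K) code (snd x))) (fst x) (fst z)"

lemma restrict_files_in_file_vectors:
  "w \<in> PiE_dflt {..<N} 0 (\<lambda>_. {..<2 ^ F}) \<Longrightarrow> restrict w {..<N} \<in> file_vectors N F"
  by (auto simp: file_vectors_def PiE_dflt_def)

lemma shift_vector_in_demand_vectors: "shift_vector N K d s \<in> demand_vectors N K"
  using N_pos by (auto simp: demand_vectors_def shift_vector_def)

lemma cache_bound:
  assumes "k < K" "(d, s, p, w) \<in> set_pmf \<Omega>"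
  shows "real (cache k (s k) p w) < 2 powr (M * real F)"
proof -
  note support = set_pmf_private_space_uniform_keys[OF N_pos assms(2)]
  have "s k * K + k < N * K"
    using support(2) assms(1) by (intro mult_add_less_mult) (auto simp: PiE_dflt_def)
  with support(3) show ?thesis
    by (simp add: cache_def cache_size restrict_files_in_file_vectors)
qed

lemma broadcast_bound:
  assumes "(d, s, p, w) \<in> set_pmf \<Omega>"
  shows "real (transmission w d p s) < 2 powr (R * real F)" "announcement d p s < B"
  using set_pmf_private_space_uniform_keys[OF N_pos assms] code_range N_pos
  by (auto simp: image_subset_iff transmission_def announcement_def rate restrict_files_in_file_vectors
      virtual_demands_in_demand_vectors shift_vector_in_demand_vectors)

lemma decoder_correct:
  assumes k: "k < K" and \<omega>: "(d, s, p, w) \<in> set_pmf \<Omega>"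
  shows "decoder k (d k) (s k) (transmission w d p s, announcement d p s) (cache k (s k) p w, s k) = w (d k)"
proof -
  note support = set_pmf_private_space_uniform_keys[OF N_pos \<omega>]
  define t where "t = shift_vector N K d s"
  have sk: "s k < N" and dk: "d k < N" using support k by (auto simp: PiE_dflt_def)
  have "virtual_demands N K t (s k * K + k) = (s k + (d k + N - s k) mod N) mod N"
    using sk k by (simp add: virtual_demands_mult_add t_def shift_vector_def)
  also have "\<dots> = d k"
    using sk dk by (rule mod_add_mod_sub_cancel)
  finally have virtual_user: "virtual_demands N K t (s k * K + k) = d k" .
  have "virtual_demands N K t \<in> demand_type_set N (N * K) (\<lambda>_. K)"
    using N_pos by (intro virtual_demands_in_demand_type_set) (auto simp: t_def shift_vector_def)
  then have "G (s k * K + k) (virtual_demands N K t) (E0 (restrict w {..<N}) (virtual_demands N K t))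
      (C0 (s k * K + k) (restrict w {..<N})) = restrict w {..<N} (d k)"
    using decodes restrict_files_in_file_vectors[OF support(3)] virtual_user
      mult_add_less_mult[OF sk k] by metis
  then show ?thesis
    using code_inj shift_vector_in_demand_vectors dk
    by (simp add: decoder_def transmission_def announcement_def cache_def t_def)
qed

lemma demands_private:
  assumes "k < K"
  shows "mutual_info \<Omega> (\<lambda>(d, s, p, w). restrict d ({..<K} - {k}))
    (\<lambda>(d, s, p, w). ((cache k (s k) p w, s k), (transmission w d p s, announcement d p s), d k)) = 0"
proof -
  define \<Phi> where "\<Phi> w sk dk t = ((C0 (sk * K + k) (restrict w {..<N}), sk),
    (E0 (restrict w {..<N}) (virtual_demands N K t), code t), dk)" for w and sk dk :: nat and t
  obtain P Q where "map_pmf (\<lambda>(d, s, p, w). (restrict d ({..<K} - {k}), \<Phi> w (s k) (d k) (shift_vector N K d s)))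
      \<Omega> = pair_pmf P Q"
    using other_demands_indep_of_view[OF assms N_pos] by blast
  then show ?thesis
    by (intro mutual_info_eq_0_if_indep)
       (simp add: \<Phi>_def cache_def transmission_def announcement_def case_prod_beta')
qed

theorem private_scheme: "private_scheme N K M R F B"
  unfolding private_scheme_def Let_def
  using N_pos cache_bound broadcast_bound decoder_correct demands_private
  by (intro exI[of _ "\<lambda>_. pmf_of_set {..<N}"] exI[of _ "return_pmf 0"] exI[of _ cache]
      exI[of _ transmission] exI[of _ announcement] exI[of _ decoder])
    (auto simp: lessThan_empty_iff case_prod_beta')

end

theorem corollary1:
  fixes N K :: nat and M R :: real
  assumes "N \<ge> 1" and "K \<ge> 1"
  shows "\<exists>B::nat. \<forall>F::nat.
           nonprivate_scheme N (N * K) M R F (demand_type_set N (N * K) (\<lambda>_. K)) \<longrightarrow>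
           private_scheme N K M R F B"
proof -
  have "finite (demand_vectors N K)" by (simp add: demand_vectors_def finite_PiE)
  then obtain code where code: "bij_betw code (demand_vectors N K) {..<card (demand_vectors N K)}"
    using ex_bij_betw_finite_nat atLeast0LessThan by metis
  show ?thesis
  proof (intro exI allI impI)
    fix F assume "nonprivate_scheme N (N * K) M R F (demand_type_set N (N * K) (\<lambda>_. K))"
    then obtain C0 E0 G where
      "\<forall>j<N * K. \<forall>W\<in>file_vectors N F. real (C0 j W) < 2 powr (M * real F)"
      "\<forall>W\<in>file_vectors N F. \<forall>d\<in>demand_vectors N (N * K). real (E0 W d) < 2 powr (R * real F)"
      "\<forall>W\<in>file_vectors N F. \<forall>d\<in>demand_type_set N (N * K) (\<lambda>_. K) \<inter> demand_vectors N (N * K).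
         \<forall>j<N * K. G j d (E0 W d) (C0 j W) = W (d j)"
      unfolding nonprivate_scheme_def by blast
    then interpret virtual_user_scheme N K F M R "card (demand_vectors N K)" C0 E0 G code
      using assms(1) code by unfold_locales (auto simp: demand_type_set_def bij_betw_def)
    show "private_scheme N K M R F (card (demand_vectors N K))"
      by (rule private_scheme)
  qed
qed

end
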